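(* Let $P$ be a finite poset with height function $h$. Then the $q$-Zeta polynomial of $P$ with the shifted height function $h+1$ is $$\mathsf{Z}_{P,h+1}(x)=\frac{1}{q}\big(1+(q-1)x\big)\,\mathsf{Z}_{P,h}(x).$$
   Context: $q$ is an indeterminate; $[n]_q=(q^n-1)/(q-1)$. A height function on a finite poset $P$ is $h:P\to\mathbb{N}$ with $h(x)<h(y)$ whenever $y$ covers $x$. The $q$-Zeta polynomial $\mathsf{Z}_{P,h}\in\mathbb{Q}(q)[x]$ is the unique polynomial with $\mathsf{Z}_{P,h}([n]_q)=\sum_{e_1\le\cdots\le e_{n-1}\text{ in }P}q^{h(e_1)+\cdots+h(e_{n-1})}$ for all integers $n\ge2$ (such a polynomial exists). *)

theory Defs
  imports "HOL-Computational_Algebra.Polynomial" "HOL-Computational_Algebra.Fraction_Field"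
begin

type_synonym ratfun = "rat poly fract"

definition qvar :: ratfun where
  "qvar = Fract [:0, 1:] 1"

definition qint :: "nat \<Rightarrow> ratfun" where
  "qint n = (\<Sum>i<n. qvar ^ i)"

definition covers :: "'a::order set \<Rightarrow> 'a \<Rightarrow> 'a \<Rightarrow> bool" where
  "covers P x y \<longleftrightarrow> x \<in> P \<and> y \<in> P \<and> x < y \<and> \<not> (\<exists>z\<in>P. x < z \<and> z < y)"

definition height_fun :: "'a::order set \<Rightarrow> ('a \<Rightarrow> nat) \<Rightarrow> bool" where
  "height_fun P h \<longleftrightarrow> (\<forall>x y. covers P x y \<longrightarrow> h x < h y)"

definition multichains :: "'a::order set \<Rightarrow> nat \<Rightarrow> 'a list set" where
  "multichains P k = {xs. set xs \<subseteq> P \<and> length xs = k \<and> sorted_wrt (\<le>) xs}"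

definition zeta_sum :: "'a::order set \<Rightarrow> ('a \<Rightarrow> nat) \<Rightarrow> nat \<Rightarrow> ratfun" where
  "zeta_sum P h n = (\<Sum>xs\<in>multichains P (n - 1). qvar ^ sum_list (map h xs))"

definition qzeta :: "'a::order set \<Rightarrow> ('a \<Rightarrow> nat) \<Rightarrow> ratfun poly" where
  "qzeta P h = (THE Z. \<forall>n\<ge>2. poly Z (qint n) = zeta_sum P h n)"

end

theory Submission
  imports Defs
begin

text \<open>Shifting h by one multiplies the weight of a multichain of length k = n - 1 by q^k, and
  q^n = 1 + (q - 1) [n]_q, so the right-hand side takes the values of the shifted sums at every
  [n]_q; since the points [n]_q are pairwise distinct, interpolation is unique. The real content
  is that the q-Zeta polynomial exists at all: splitting off the least element of a multichain
  shows that the weighted count of multichains of length k + 1 is a linear combination of the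
  geometric sequences (q^h(x))^k, because h is strictly increasing on chains, so no ratio
  repeats in the recurrence. Each such sequence is interpolated at [k + 2]_q by a power of
  (1 + (q - 1) x) / q^2.\<close>

inductive geom_comb :: "'a::comm_semiring_1 set \<Rightarrow> (nat \<Rightarrow> 'a) \<Rightarrow> bool" for B where
  zero: "geom_comb B (\<lambda>_. 0)"
| power: "c \<in> B \<Longrightarrow> geom_comb B (\<lambda>k. c ^ k)"
| add: "geom_comb B f \<Longrightarrow> geom_comb B g \<Longrightarrow> geom_comb B (\<lambda>k. f k + g k)"
| scale: "geom_comb B f \<Longrightarrow> geom_comb B (\<lambda>k. r * f k)"

lemma geom_comb_mono: "geom_comb B f \<Longrightarrow> B \<subseteq> C \<Longrightarrow> geom_comb C f"
  by (induction rule: geom_comb.induct) (auto intro: geom_comb.intros)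

lemma geom_comb_sum: "(\<And>i. i \<in> I \<Longrightarrow> geom_comb B (f i)) \<Longrightarrow> geom_comb B (\<lambda>k. \<Sum>i\<in>I. f i k)"
  by (induction I rule: infinite_finite_induct) (auto intro: geom_comb.intros)

lemma linear_recurrence_solution:
  fixes a :: "'a::comm_semiring_1"
  assumes "\<And>k. G (Suc k) = a * G k + F k"
  shows "G k = G 0 * a ^ k + (\<Sum>j<k. a ^ (k - Suc j) * F j)"
proof (induction k)
  case (Suc k)
  have "(\<Sum>j<Suc k. a ^ (Suc k - Suc j) * F j) = a * (\<Sum>j<k. a ^ (k - Suc j) * F j) + F k"
    by (simp add: sum_distrib_left mult.assoc[symmetric] Suc_diff_Suc
                  power_Suc[symmetric] del: power_Suc)
  then show ?case
    using assms[of k] Suc by (simp add: algebra_simps)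
qed simp

lemma geom_comb_convolution:
  fixes a :: "'a::field"
  assumes "geom_comb B F" "a \<notin> B"
  shows "geom_comb (insert a B) (\<lambda>k. \<Sum>j<k. a ^ (k - Suc j) * F j)"
  using assms(1)
proof (induction rule: geom_comb.induct)
  case (power c)
  with assms(2) have "c \<noteq> a" by auto
  have "(\<Sum>j<k. a ^ (k - Suc j) * c ^ j) = inverse (c - a) * c ^ k + (- inverse (c - a)) * a ^ k" for k
  proof -
    have "(c - a) * (\<Sum>j<k. a ^ (k - Suc j) * c ^ j) = c ^ k - a ^ k"
      by (rule power_diff_sumr2[symmetric])
    with \<open>c \<noteq> a\<close> have "(\<Sum>j<k. a ^ (k - Suc j) * c ^ j) = inverse (c - a) * (c ^ k - a ^ k)"
      by (simp add: eq_divide_eq divide_inverse_commute[symmetric] mult.commute)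
    then show ?thesis by (simp add: algebra_simps)
  qed
  moreover have "geom_comb (insert a B) (\<lambda>k. inverse (c - a) * c ^ k + (- inverse (c - a)) * a ^ k)"
    using power by (intro geom_comb.intros) auto
  ultimately show ?case by simp
next
  case (add f g)
  then show ?case
    by (simp add: distrib_left sum.distrib geom_comb.add)
next
  case (scale f r)
  then show ?case
    by (simp add: mult.left_commute[of _ r] sum_distrib_left[symmetric] geom_comb.scale)
qed (simp add: geom_comb.zero)

lemma geom_comb_linear_recurrence:
  fixes a :: "'a::field"
  assumes "geom_comb B F" "a \<notin> B" "\<And>k. G (Suc k) = a * G k + F k"
  shows "geom_comb (insert a B) G"
proof -
  have "G = (\<lambda>k. G 0 * a ^ k + (\<Sum>j<k. a ^ (k - Suc j) * F j))"
    using assms(3) by (intro ext linear_recurrence_solution)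
  moreover have "geom_comb (insert a B) (\<lambda>k. G 0 * a ^ k + (\<Sum>j<k. a ^ (k - Suc j) * F j))"
    using assms(1,2) by (intro geom_comb.intros geom_comb_convolution) auto
  ultimately show ?thesis
    by (elim ssubst)
qed

definition multichain_sum :: "'a::order set \<Rightarrow> ('a \<Rightarrow> 'b::comm_semiring_1) \<Rightarrow> nat \<Rightarrow> 'b" where
  "multichain_sum P w k = (\<Sum>xs\<in>multichains P k. prod_list (map w xs))"

lemma finite_multichains: "finite P \<Longrightarrow> finite (multichains P k)"
  unfolding multichains_def
  by (rule finite_subset[OF _ finite_lists_length_eq[of P k]]) auto

lemma multichains_Suc:
  "multichains P (Suc k) = (\<lambda>(x, ys). x # ys) ` (SIGMA x:P. multichains {y\<in>P. x \<le> y} k)"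
proof (intro set_eqI iffI)
  fix xs assume "xs \<in> multichains P (Suc k)"
  then obtain x ys where "xs = x # ys" "x \<in> P" "ys \<in> multichains {y\<in>P. x \<le> y} k"
    unfolding multichains_def by (cases xs) auto
  then show "xs \<in> (\<lambda>(x, ys). x # ys) ` (SIGMA x:P. multichains {y\<in>P. x \<le> y} k)"
    by force
qed (auto simp: multichains_def)

lemma multichain_sum_Suc:
  assumes "finite P"
  shows "multichain_sum P w (Suc k) = (\<Sum>x\<in>P. w x * multichain_sum {y\<in>P. x \<le> y} w k)"
proof -
  have "inj_on (\<lambda>(x, ys). x # ys) (SIGMA x:P. multichains {y\<in>P. x \<le> y} k)"
    by (auto simp: inj_on_def)
  then have "multichain_sum P w (Suc k)
      = (\<Sum>(x, ys)\<in>(SIGMA x:P. multichains {y\<in>P. x \<le> y} k). w x * prod_list (map w ys))"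
    by (simp add: multichain_sum_def multichains_Suc sum.reindex case_prod_unfold)
  also have "\<dots> = (\<Sum>x\<in>P. \<Sum>ys\<in>multichains {y\<in>P. x \<le> y} k. w x * prod_list (map w ys))"
    using assms by (simp add: sum.Sigma finite_multichains)
  finally show ?thesis
    by (simp add: multichain_sum_def sum_distrib_left)
qed

lemma multichain_sum_Suc_minimum:
  assumes "finite P" "x \<in> P" "\<And>y. y \<in> P \<Longrightarrow> x \<le> y"
  shows "multichain_sum P w (Suc k) = w x * multichain_sum P w k + multichain_sum (P - {x}) w (Suc k)"
proof -
  have up: "{z\<in>P - {x}. y \<le> z} = {z\<in>P. y \<le> z}" if "y \<in> P - {x}" for y
    using that assms(3) by (auto intro: order.antisym)
  have "{y\<in>P. x \<le> y} = P"
    using assms(3) by auto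
  then have "multichain_sum P w (Suc k)
      = w x * multichain_sum P w k + (\<Sum>y\<in>P - {x}. w y * multichain_sum {z\<in>P. y \<le> z} w k)"
    using assms(1,2) by (simp add: multichain_sum_Suc sum.remove)
  also have "(\<Sum>y\<in>P - {x}. w y * multichain_sum {z\<in>P. y \<le> z} w k)
      = (\<Sum>y\<in>P - {x}. w y * multichain_sum {z\<in>P - {x}. y \<le> z} w k)"
    by (rule sum.cong[OF refl]) (simp only: up)
  also have "\<dots> = multichain_sum (P - {x}) w (Suc k)"
    by (rule multichain_sum_Suc[symmetric]) (use assms(1) in simp)
  finally show ?thesis .
qed

lemma multichain_sum_scale:
  "multichain_sum P (\<lambda>x. c * w x) k = c ^ k * multichain_sum P w k"
proof -
  have "prod_list (map (\<lambda>x. c * w x) xs) = c ^ length xs * prod_list (map w xs)" for xs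
    by (induction xs) (simp_all add: mult_ac)
  then show ?thesis
    by (simp add: multichain_sum_def multichains_def sum_distrib_left)
qed

lemma geom_comb_multichain_sum:
  fixes w :: "'a::order \<Rightarrow> 'b::field"
  assumes "finite P" "\<And>x y. x \<in> P \<Longrightarrow> y \<in> P \<Longrightarrow> x < y \<Longrightarrow> w x \<noteq> w y"
  shows "geom_comb (w ` P) (\<lambda>k. multichain_sum P w (Suc k))"
  using assms
proof (induction "card P" arbitrary: P rule: less_induct)
  case less
  have "geom_comb (w ` P) (\<lambda>k. w x * multichain_sum {y\<in>P. x \<le> y} w k)" if "x \<in> P" for x
  proof -
    let ?U = "{y\<in>P. x \<le> y}" and ?R = "{y\<in>P. x < y}"
    have "card ?R < card P"
      using that less.prems(1) by (intro psubset_card_mono) auto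
    then have "geom_comb (w ` ?R) (\<lambda>k. multichain_sum ?R w (Suc k))"
      by (rule less.hyps) (use less.prems in auto)
    moreover have "w x \<notin> w ` ?R"
      using that less.prems(2) by fastforce
    moreover have "multichain_sum ?U w (Suc k) = w x * multichain_sum ?U w k + multichain_sum ?R w (Suc k)" for k
    proof -
      have "multichain_sum ?U w (Suc k)
          = w x * multichain_sum ?U w k + multichain_sum (?U - {x}) w (Suc k)"
        by (rule multichain_sum_Suc_minimum) (use that less.prems(1) in auto)
      also have "?U - {x} = ?R"
        by auto
      finally show ?thesis .
    qed
    ultimately have "geom_comb (insert (w x) (w ` ?R)) (multichain_sum ?U w)"
      by (rule geom_comb_linear_recurrence)
    then have "geom_comb (w ` P) (multichain_sum ?U w)"
      by (rule geom_comb_mono) (use that in auto)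
    then show ?thesis
      by (rule geom_comb.scale)
  qed
  then have "geom_comb (w ` P) (\<lambda>k. \<Sum>x\<in>P. w x * multichain_sum {y\<in>P. x \<le> y} w k)"
    by (rule geom_comb_sum)
  then show ?case
    using less.prems(1) by (simp only: multichain_sum_Suc)
qed

lemma height_fun_less:
  assumes "finite P" "height_fun P h" "x \<in> P" "y \<in> P" "x < y"
  shows "h x < h y"
  using assms(3-)
proof (induction "card {z\<in>P. x < z \<and> z < y}" arbitrary: x y rule: less_induct)
  case less
  show ?case
  proof (cases "covers P x y")
    case True
    with assms(2) show ?thesis
      by (simp add: height_fun_def)
  next
    case False
    with less.prems obtain z where z: "z \<in> P" "x < z" "z < y"
      by (auto simp: covers_def)
    have "card {w\<in>P. x < w \<and> w < z} < card {w\<in>P. x < w \<and> w < y}"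
         "card {w\<in>P. z < w \<and> w < y} < card {w\<in>P. x < w \<and> w < y}"
      using assms(1) z by (intro psubset_card_mono; auto)+
    then have "h x < h z" "h z < h y"
      using less.hyps less.prems z by blast+
    then show ?thesis
      by simp
  qed
qed

lemma qvar_power: "qvar ^ n = Fract ([:0, 1:] ^ n) 1"
  by (induction n) (auto simp: qvar_def One_fract_def)

lemma qvar_power_eq_iff: "qvar ^ m = qvar ^ n \<longleftrightarrow> m = n"
proof
  assume "qvar ^ m = qvar ^ n"
  then have "([:0, 1:] ^ m :: rat poly) = [:0, 1:] ^ n"
    by (simp add: qvar_power eq_fract)
  then have "degree ([:0, 1:] ^ m :: rat poly) = degree ([:0, 1:] ^ n :: rat poly)"
    by simp
  then show "m = n"
    by (simp add: degree_power_eq)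
qed simp

lemma qvar_nonzero: "qvar \<noteq> 0"
  using qvar_power_eq_iff[of 1 2] by auto

lemma poly_qint: "poly [:1, qvar - 1:] (qint n) = qvar ^ n"
  using power_diff_1_eq[of qvar n] by (simp add: qint_def algebra_simps)

lemma inj_qint: "inj qint"
  by (rule injI) (metis poly_qint qvar_power_eq_iff)

lemma poly_eqI_qint:
  assumes "\<And>n. 2 \<le> n \<Longrightarrow> poly p (qint n) = poly r (qint n)"
  shows "p = r"
proof (rule ccontr)
  assume "p \<noteq> r"
  then have "finite {x. poly (p - r) x = 0}"
    by (intro poly_roots_finite) simp
  moreover have "qint ` {2..} \<subseteq> {x. poly (p - r) x = 0}"
    using assms by auto
  moreover have "infinite (qint ` {2::nat..})"
    using inj_qint by (metis finite_imageD infinite_Ici inj_on_subset subset_UNIV)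
  ultimately show False
    using finite_subset by blast
qed

lemma geom_comb_qvar_powers_interpolation:
  assumes "geom_comb B g" "B \<subseteq> range (\<lambda>d. qvar ^ d)"
  shows "\<exists>Z. \<forall>k. poly Z (qint (Suc (Suc k))) = g k"
  using assms
proof (induction rule: geom_comb.induct)
  case zero
  show ?case by (intro exI[of _ 0]) simp
next
  case (power c)
  then obtain d where d: "c = qvar ^ d"
    by auto
  define L where "L = smult (inverse (qvar ^ 2)) [:1, qvar - 1:]"
  have "poly L (qint (Suc (Suc k))) = qvar ^ k" for k
  proof -
    have "poly L (qint (Suc (Suc k))) = inverse (qvar ^ 2) * (qvar ^ 2 * qvar ^ k)"
      by (simp only: L_def poly_smult poly_qint power_add[symmetric] add_2_eq_Suc)
    then show ?thesis
      using qvar_nonzero by simp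
  qed
  then have "poly (L ^ d) (qint (Suc (Suc k))) = c ^ k" for k
    by (simp add: d poly_power power_mult[symmetric] mult.commute)
  then show ?case by blast
next
  case (add f g)
  then obtain Zf Zg where "\<forall>k. poly Zf (qint (Suc (Suc k))) = f k" "\<forall>k. poly Zg (qint (Suc (Suc k))) = g k"
    by blast
  then show ?case
    by (intro exI[of _ "Zf + Zg"]) simp
next
  case (scale f r)
  then obtain Z where "\<forall>k. poly Z (qint (Suc (Suc k))) = f k"
    by blast
  then show ?case
    by (intro exI[of _ "smult r Z"]) simp
qed

lemma zeta_sum_eq_multichain_sum: "zeta_sum P h n = multichain_sum P (\<lambda>x. qvar ^ h x) (n - 1)"
proof -
  have "qvar ^ sum_list (map h xs) = prod_list (map (\<lambda>x. qvar ^ h x) xs)" for xs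
    by (induction xs) (simp_all add: power_add)
  then show ?thesis
    by (simp add: zeta_sum_def multichain_sum_def)
qed

lemma qzeta_eqI:
  assumes "\<And>n. 2 \<le> n \<Longrightarrow> poly Z (qint n) = zeta_sum P h n"
  shows "qzeta P h = Z"
  unfolding qzeta_def
  by (rule the_equality) (use assms poly_eqI_qint in auto)

lemma poly_qzeta:
  assumes "finite P" "height_fun P h" "2 \<le> n"
  shows "poly (qzeta P h) (qint n) = zeta_sum P h n"
proof -
  have "qvar ^ h x \<noteq> qvar ^ h y" if "x \<in> P" "y \<in> P" "x < y" for x y
    using height_fun_less[OF assms(1,2) that] by (simp add: qvar_power_eq_iff)
  with assms(1) have "geom_comb ((\<lambda>x. qvar ^ h x) ` P) (\<lambda>k. multichain_sum P (\<lambda>x. qvar ^ h x) (Suc k))"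
    by (rule geom_comb_multichain_sum)
  moreover have "(\<lambda>x. qvar ^ h x) ` P \<subseteq> range (\<lambda>d. qvar ^ d)"
    by auto
  ultimately obtain Z where Z: "\<And>k. poly Z (qint (Suc (Suc k))) = multichain_sum P (\<lambda>x. qvar ^ h x) (Suc k)"
    using geom_comb_qvar_powers_interpolation by blast
  have "poly Z (qint n) = zeta_sum P h n" if "2 \<le> n" for n
  proof -
    from that have "Suc (Suc (n - 2)) = n" "Suc (n - 2) = n - 1"
      by arith+
    then show ?thesis
      using Z[of "n - 2"] by (simp add: zeta_sum_eq_multichain_sum)
  qed
  then have "qzeta P h = Z"
    by (rule qzeta_eqI)
  with assms(3) \<open>\<And>n. 2 \<le> n \<Longrightarrow> poly Z (qint n) = zeta_sum P h n\<close> show ?thesis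
    by simp
qed

theorem mainTheorem16:
  fixes P :: "'a::order set" and h :: "'a \<Rightarrow> nat"
  assumes "finite P" and "height_fun P h"
  shows "qzeta P (\<lambda>x. h x + 1) = smult (inverse qvar) ([:1, qvar - 1:] * qzeta P h)"
proof (rule qzeta_eqI)
  fix n :: nat
  assume "2 \<le> n"
  have "poly (smult (inverse qvar) ([:1, qvar - 1:] * qzeta P h)) (qint n)
      = inverse qvar * (poly [:1, qvar - 1:] (qint n) * poly (qzeta P h) (qint n))"
    by (simp only: poly_smult poly_mult)
  also have "\<dots> = inverse qvar * (qvar ^ n * zeta_sum P h n)"
    by (simp only: poly_qint poly_qzeta[OF assms \<open>2 \<le> n\<close>])
  also have "\<dots> = qvar ^ (n - 1) * zeta_sum P h n"
    using \<open>2 \<le> n\<close> qvar_nonzero by (simp add: power_eq_if)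
  also have "\<dots> = zeta_sum P (\<lambda>x. h x + 1) n"
    by (simp add: zeta_sum_eq_multichain_sum multichain_sum_scale)
  finally show "poly (smult (inverse qvar) ([:1, qvar - 1:] * qzeta P h)) (qint n) = zeta_sum P (\<lambda>x. h x + 1) n" .
qed

end
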